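(* Let $p,q\in\mathbb{N}$ with $2\le q\le \frac p2-1$. If $\overline{\xi_f}(E_{p/(q-1)})=\frac{p}{q-1}$ and $\overline{\xi_f}(E_{p/(q+1)})=\frac{p}{q+1}$, then $\overline{\xi_f}(E_{p/q})=\frac pq$.
   Context: For $p,k\in\mathbb{N}$ with $p/k\ge2$, the fraction graph $E_{p/k}$ has vertex set $\mathbb{Z}_p=\{0,\dots,p-1\}$, and distinct vertices $i,j$ are adjacent iff their cyclic distance $\min(|i-j|,p-|i-j|)$ is strictly less than $k$ (the graph depends on the pair $(p,k)$, e.g. $E_{p/(q-1)}$ uses threshold $q-1$ on $\mathbb{Z}_p$). For a graph $G$, $\overline{\xi_f}(G)$ (complement of the projective rank) is the infimum of $d/r$ over all $d,r\in\mathbb{N}$ for which there is an assignment of $r$-dimensional subspaces $W_v\le\mathbb{C}^d$ to the vertices of $G$ such that distinct non-adjacent vertices receive orthogonal subspaces. *)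

theory Defs
  imports "Jordan_Normal_Form.VS_Connect" "Jordan_Normal_Form.Conjugate"
begin

text \<open>Cyclic distance on Z_p (vertices are represented by 0..<p).\<close>
definition cyc_dist :: "nat \<Rightarrow> nat \<Rightarrow> nat \<Rightarrow> nat" where
  "cyc_dist p i j = min (nat \<bar>int i - int j\<bar>) (p - nat \<bar>int i - int j\<bar>)"

definition frac_verts :: "nat \<Rightarrow> nat set" where
  "frac_verts p = {0..<p}"

definition frac_adj :: "nat \<Rightarrow> nat \<Rightarrow> nat \<Rightarrow> nat \<Rightarrow> bool" where
  "frac_adj p k i j \<longleftrightarrow> i \<noteq> j \<and> cyc_dist p i j < k"

definition is_subspace_of_dim :: "nat \<Rightarrow> nat \<Rightarrow> complex vec set \<Rightarrow> bool" where
  "is_subspace_of_dim d r W \<longleftrightarrow>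
     subspace class_ring W (module_vec TYPE(complex) d) \<and>
     vectorspace.dim class_ring ((module_vec TYPE(complex) d)\<lparr>carrier := W\<rparr>) = r"

definition comp_proj_rep ::
  "'v set \<Rightarrow> ('v \<Rightarrow> 'v \<Rightarrow> bool) \<Rightarrow> nat \<Rightarrow> nat \<Rightarrow> bool" where
  "comp_proj_rep V adj d r \<longleftrightarrow>
     (\<exists>W :: 'v \<Rightarrow> complex vec set.
        (\<forall>v\<in>V. is_subspace_of_dim d r (W v)) \<and>
        (\<forall>u\<in>V. \<forall>v\<in>V. u \<noteq> v \<and> \<not> adj u v \<longrightarrow>
            (\<forall>x\<in>W u. \<forall>y\<in>W v. x \<bullet>c y = 0)))"

text \<open>Complement of projective rank: infimum of d/r over representations (d, r \<in> N, r \<ge> 1).\<close>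
definition xi_f_bar :: "'v set \<Rightarrow> ('v \<Rightarrow> 'v \<Rightarrow> bool) \<Rightarrow> real" where
  "xi_f_bar V adj = Inf {real d / real r | d r. d \<ge> 1 \<and> r \<ge> 1 \<and> comp_proj_rep V adj d r}"

end

(*
  A (d, r)-representation W of E_{p/q} assigns to each vertex i an r-dimensional space
  W_i of C^d such that W_i and W_j are orthogonal whenever the cyclic distance of i and j
  is at least q. Then the sums A_i = W_i + W_{i+1} are orthogonal at distance q + 1, and,
  since 2q <= p, the intersections B_i = W_i \<inter> W_{i+1} are orthogonal at distance q - 1.
  Giving vertex i the block sum of A_{i+s} (s < p) inside C^{pd} turns A into a
  (pd, \<Sum>_s dim A_s)-representation of E_{p/(q+1)}: cyclic distance is invariant under
  rotation, so far-apart vertices are orthogonal block by block. Likewise B yields a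
  representation of E_{p/(q-1)}. The hypotheses therefore bound \<Sum>_s dim A_s by d (q + 1)
  and \<Sum>_s dim B_s by d (q - 1), while Grassmann's formula gives dim A_s + dim B_s >= 2r.
  Hence 2pr <= 2qd, i.e. d/r >= p/q; the value p/q itself is attained by giving vertex i
  the coordinates i, ..., i + q - 1 of C^p.
*)
theory Submission
  imports Defs
begin

section \<open>Cyclic distance\<close>

definition cyc_offset :: "nat \<Rightarrow> nat \<Rightarrow> nat \<Rightarrow> nat" where
  "cyc_offset p i j = nat ((int j - int i) mod int p)"

lemma int_cyc_offset: "0 < p \<Longrightarrow> int (cyc_offset p i j) = (int j - int i) mod int p"
  unfolding cyc_offset_def by simp

lemma cyc_offset_less: "0 < p \<Longrightarrow> cyc_offset p i j < p"
  unfolding cyc_offset_def by (simp add: nat_less_iff)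

lemma cyc_offset_rotate: "cyc_offset p ((i + s) mod p) ((j + s) mod p) = cyc_offset p i j"
  unfolding cyc_offset_def by (simp add: of_nat_mod mod_diff_eq)

lemma cyc_offset_add_mod:
  assumes "0 < p" shows "cyc_offset p i ((i + t) mod p) = t mod p"
proof -
  have "int (cyc_offset p i ((i + t) mod p)) = int (t mod p)"
    using assms by (simp add: int_cyc_offset of_nat_mod mod_diff_left_eq)
  then show ?thesis by (simp only: of_nat_eq_iff)
qed

lemma cyc_offset_Suc_right:
  assumes "cyc_offset p i j + 1 < p"
  shows "cyc_offset p i ((j + 1) mod p) = cyc_offset p i j + 1"
proof -
  have p: "0 < p" using assms by simp
  have "int (cyc_offset p i ((j + 1) mod p)) = (int j - int i + 1) mod int p"
    using p by (simp add: int_cyc_offset of_nat_mod mod_diff_left_eq algebra_simps)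
  also have "\<dots> = ((int j - int i) mod int p + 1) mod int p"
    by (rule mod_add_left_eq[symmetric])
  also have "\<dots> = int (cyc_offset p i j + 1)"
    using assms by (simp add: mod_pos_pos_trivial flip: int_cyc_offset[OF p])
  finally show ?thesis by (simp only: of_nat_eq_iff)
qed

lemma cyc_offset_Suc_left:
  assumes p: "0 < p" and "0 < cyc_offset p i j"
  shows "cyc_offset p ((i + 1) mod p) j = cyc_offset p i j - 1"
proof -
  have "int (cyc_offset p ((i + 1) mod p) j) = (int j - int i - 1) mod int p"
    using p by (simp add: int_cyc_offset of_nat_mod mod_diff_right_eq algebra_simps)
  also have "\<dots> = ((int j - int i) mod int p - 1) mod int p"
    by (rule mod_diff_left_eq[symmetric])
  also have "\<dots> = int (cyc_offset p i j - 1)"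
    using assms cyc_offset_less[OF p, of i j]
    by (simp add: of_nat_diff mod_pos_pos_trivial flip: int_cyc_offset[OF p])
  finally show ?thesis by (simp only: of_nat_eq_iff)
qed

lemma cyc_dist_eq_min_offset:
  assumes "i < p" "j < p"
  shows "cyc_dist p i j = min (cyc_offset p i j) (p - cyc_offset p i j)"
proof (cases "i \<le> j")
  case True
  then have "cyc_offset p i j = j - i"
    unfolding cyc_offset_def using assms by (simp add: of_nat_diff)
  then show ?thesis unfolding cyc_dist_def using True by (simp add: nat_diff_distrib)
next
  case False
  have "(int j - int i) mod int p = (int j - int i + int p) mod int p" by simp
  also have "\<dots> = int j - int i + int p" using False assms by (intro mod_pos_pos_trivial) auto
  finally have "cyc_offset p i j = p - (i - j)" unfolding cyc_offset_def using False assms by simp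
  then show ?thesis unfolding cyc_dist_def using False assms by (simp add: min.commute)
qed

lemma le_cyc_dist_iff:
  assumes "i < p" "j < p"
  shows "k \<le> cyc_dist p i j \<longleftrightarrow> k \<le> cyc_offset p i j \<and> cyc_offset p i j + k \<le> p"
  using cyc_dist_eq_min_offset[OF assms] cyc_offset_less[of p i j] assms by auto

lemma cyc_dist_sym: "cyc_dist p i j = cyc_dist p j i"
  unfolding cyc_dist_def by (simp add: abs_minus_commute)

lemma cyc_dist_self: "cyc_dist p i i = 0"
  unfolding cyc_dist_def by simp

lemma cyc_dist_rotate:
  assumes "i < p" "j < p"
  shows "cyc_dist p ((i + s) mod p) ((j + s) mod p) = cyc_dist p i j"
  using assms by (simp add: cyc_dist_eq_min_offset cyc_offset_rotate)

lemma cyc_dist_Suc_left: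
  assumes "i < p" "j < p" "Suc k \<le> cyc_dist p i j"
  shows "k \<le> cyc_dist p ((i + 1) mod p) j"
proof -
  have p: "0 < p" using assms by simp
  have "Suc k \<le> cyc_offset p i j" "cyc_offset p i j + Suc k \<le> p"
    using assms by (simp_all add: le_cyc_dist_iff)
  moreover have "(i + 1) mod p < p" using p by simp
  ultimately show ?thesis
    using assms cyc_offset_Suc_left[OF p, of i j] by (simp only: le_cyc_dist_iff) linarith
qed

lemma cyc_dist_Suc_right:
  assumes "i < p" "j < p" "Suc k \<le> cyc_dist p i j"
  shows "k \<le> cyc_dist p i ((j + 1) mod p)"
  using cyc_dist_Suc_left[of j p i k] assms by (simp add: cyc_dist_sym)

lemma cyc_dist_neighbour_ge:
  assumes "i < p" "j < p" "2 * k \<le> p" "2 \<le> k" "k - 1 \<le> cyc_dist p i j"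
  shows "k \<le> cyc_dist p i j \<or> k \<le> cyc_dist p ((i + 1) mod p) j \<or> k \<le> cyc_dist p i ((j + 1) mod p)"
proof -
  have p: "0 < p" using assms by simp
  have f: "k - 1 \<le> cyc_offset p i j" "cyc_offset p i j + (k - 1) \<le> p"
    using assms by (simp_all add: le_cyc_dist_iff)
  consider "k \<le> cyc_offset p i j" "cyc_offset p i j + k \<le> p"
    | "cyc_offset p i j = k - 1" | "cyc_offset p i j + (k - 1) = p"
    using f by linarith
  then show ?thesis
  proof cases
    case 1
    then show ?thesis using assms by (simp only: le_cyc_dist_iff) simp
  next
    case 2
    then have "cyc_offset p i ((j + 1) mod p) = k"
      using assms cyc_offset_Suc_right[of p i j] by simp
    moreover have "(j + 1) mod p < p" using p by simp
    ultimately show ?thesis using assms by (simp only: le_cyc_dist_iff) simp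
  next
    case 3
    then have "cyc_offset p ((i + 1) mod p) j = p - k"
      using assms cyc_offset_Suc_left[OF p, of i j] by simp
    moreover have "(i + 1) mod p < p" using p by simp
    ultimately show ?thesis using assms by (simp only: le_cyc_dist_iff) linarith
  qed
qed

lemma add_mod_neq_of_le_cyc_dist:
  assumes "i < p" "j < p" "q \<le> cyc_dist p i j" "a < q" "b < q"
  shows "(i + a) mod p \<noteq> (j + b) mod p"
proof
  assume "(i + a) mod p = (j + b) mod p"
  then have ab: "(int i + int a) mod int p = (int j + int b) mod int p"
    by (metis of_nat_add of_nat_mod)
  have "(int a - int b) mod int p = ((int i + int a) - (int j + int b) + (int j - int i)) mod int p"
    by (simp add: algebra_simps)
  also have "\<dots> = ((int j + int b) - (int j + int b) + (int j - int i)) mod int p"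
    by (rule mod_add_cong[OF mod_diff_cong[OF ab refl] refl])
  finally have off: "int (cyc_offset p i j) = (int a - int b) mod int p"
    using assms by (simp add: int_cyc_offset)
  have le: "q \<le> cyc_offset p i j" "cyc_offset p i j + q \<le> p"
    using assms by (simp_all add: le_cyc_dist_iff)
  show False
  proof (cases "b \<le> a")
    case True
    then have "(int a - int b) mod int p = int a - int b"
      using assms le by (intro mod_pos_pos_trivial) auto
    then show False using off le assms by linarith
  next
    case False
    have "(int a - int b) mod int p = (int a - int b + int p) mod int p" by simp
    also have "\<dots> = int a - int b + int p" using False assms le by (intro mod_pos_pos_trivial) auto
    finally show False using off le assms by linarith
  qed
qed

lemma bij_betw_add_mod:
  fixes i p :: nat
  assumes "i < p"
  shows "bij_betw (\<lambda>s. (i + s) mod p) {..<p} {..<p}"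
proof -
  have "inj_on (\<lambda>s. (i + s) mod p) {..<p}"
  proof (rule inj_onI)
    fix s t assume st: "s \<in> {..<p}" "t \<in> {..<p}" and "(i + s) mod p = (i + t) mod p"
    then have "cyc_offset p i ((i + s) mod p) = cyc_offset p i ((i + t) mod p)" by simp
    then show "s = t" using st by (simp add: cyc_offset_add_mod)
  qed
  moreover have "(\<lambda>s. (i + s) mod p) ` {..<p} \<subseteq> {..<p}" using assms by auto
  ultimately show ?thesis
    by (simp add: bij_betw_def endo_inj_surj)
qed

section \<open>Dimensions of subspaces of K^n\<close>

definition subspace_dim :: "nat \<Rightarrow> 'a::field vec set \<Rightarrow> nat" where
  "subspace_dim n W = vectorspace.dim class_ring ((module_vec TYPE('a) n)\<lparr>carrier := W\<rparr>)"

lemma is_subspace_of_dim_iff: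
  "is_subspace_of_dim d r W \<longleftrightarrow>
     subspace class_ring W (module_vec TYPE(complex) d) \<and> subspace_dim d W = r"
  unfolding is_subspace_of_dim_def subspace_dim_def ..

context vec_space
begin

lemma subspace_iff:
  "subspace class_ring W V \<longleftrightarrow> W \<subseteq> carrier_vec n \<and> 0\<^sub>v n \<in> W \<and>
     (\<forall>x\<in>W. \<forall>y\<in>W. x + y \<in> W) \<and> (\<forall>c x. x \<in> W \<longrightarrow> c \<cdot>\<^sub>v x \<in> W)"
  unfolding subspace_def submodule_def using vectorspace_axioms module_axioms by auto

lemma subspace_Int:
  "subspace class_ring U V \<Longrightarrow> subspace class_ring W V \<Longrightarrow> subspace class_ring (U \<inter> W) V"
  unfolding subspace_iff by auto

lemma finite_card_le_of_lin_indpt: "A \<subseteq> carrier_vec n \<Longrightarrow> lin_indpt A \<Longrightarrow> finite A \<and> card A \<le> n"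
  using li_le_dim[OF fin_dim] dim_is_n by auto

lemma subspace_dim_span:
  assumes A: "A \<subseteq> carrier_vec n" and li: "lin_indpt A"
  shows "subspace_dim n (span A) = card A"
proof -
  interpret S: vectorspace class_ring "vs (span A)"
    using subspace_is_vs span_is_subspace A by auto
  have AA: "A \<subseteq> span A" using in_own_span A .
  have "S.basis A"
    unfolding S.basis_def using span_li_not_depend[OF AA span_is_submodule[OF A]] AA li by auto
  then show ?thesis
    unfolding subspace_dim_def using S.dim_basis finite_card_le_of_lin_indpt[OF A li] by auto
qed

lemma extend_to_basis:
  assumes W: "subspace class_ring W V" and A: "A \<subseteq> W" "lin_indpt A"
  shows "\<exists>B. A \<subseteq> B \<and> B \<subseteq> W \<and> lin_indpt B \<and> span B = W"
proof -
  have Wc: "W \<subseteq> carrier_vec n" using W subspace_iff by auto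
  let ?P = "\<lambda>S. A \<subseteq> S \<and> S \<subseteq> W \<and> lin_indpt S"
  obtain B where "maximal B ?P"
    using maximal_exists[of ?P n A] finite_card_le_of_lin_indpt Wc A by blast
  then have PB: "?P B" and maxB: "\<And>S. ?P S \<Longrightarrow> B \<subseteq> S \<Longrightarrow> S = B"
    unfolding maximal_def by auto
  have Bc: "B \<subseteq> carrier_vec n" using PB Wc by auto
  have "W \<subseteq> span B"
  proof
    fix w assume w: "w \<in> W"
    show "w \<in> span B"
    proof (rule ccontr)
      assume nw: "w \<notin> span B"
      then have "w \<notin> B" using in_own_span[OF Bc] by auto
      then have "lin_indpt (B \<union> {w})"
        using lin_dep_iff_in_span[OF Bc] PB nw w Wc by auto
      then have "insert w B = B" using maxB[of "insert w B"] PB w by auto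
      then show False using \<open>w \<notin> B\<close> by auto
    qed
  qed
  moreover have "span B \<subseteq> W"
    using span_is_subset PB W unfolding subspace_def by auto
  ultimately show ?thesis using PB by auto
qed

lemma obtain_subspace_basis:
  assumes W: "subspace class_ring W V"
  obtains B where "B \<subseteq> W" "finite B" "lin_indpt B" "span B = W" "card B = subspace_dim n W"
proof -
  have "lin_indpt {}" unfolding lin_dep_def by auto
  then obtain B where B: "B \<subseteq> W" "lin_indpt B" "span B = W"
    using extend_to_basis[OF W, of "{}"] by auto
  moreover have "B \<subseteq> carrier_vec n" using B W subspace_iff by auto
  ultimately show thesis
    using that subspace_dim_span finite_card_le_of_lin_indpt by metis
qed

lemma card_le_subspace_dim:
  assumes W: "subspace class_ring W V" and A: "A \<subseteq> W" "lin_indpt A"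
  shows "card A \<le> subspace_dim n W"
proof -
  obtain B where B: "A \<subseteq> B" "B \<subseteq> W" "lin_indpt B" "span B = W"
    using extend_to_basis[OF W A] by auto
  have Bc: "B \<subseteq> carrier_vec n" using B W subspace_iff by auto
  then have "card B = subspace_dim n W" using B subspace_dim_span by metis
  then show ?thesis
    using B finite_card_le_of_lin_indpt[OF Bc] card_mono by metis
qed

lemma span_Int_span_of_disjoint:
  assumes A: "A \<subseteq> carrier_vec n" and B: "B \<subseteq> carrier_vec n"
    and li: "lin_indpt (A \<union> B)" and disj: "A \<inter> B = {}"
  shows "span A \<inter> span B \<subseteq> {0\<^sub>v n}"
proof
  fix v assume v: "v \<in> span A \<inter> span B"
  then obtain a FA where FA: "FA \<subseteq> A" "finite FA" "v = lincomb a FA"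
    unfolding span_def by blast
  obtain b FB where FB: "FB \<subseteq> B" "finite FB" "v = lincomb b FB"
    using v unfolding span_def by blast
  define c where "c w = (if w \<in> FA then a w else - b w)" for w
  have FAc: "FA \<subseteq> carrier_vec n" and FBc: "FB \<subseteq> carrier_vec n" using FA FB A B by auto
  have disj': "FA \<inter> FB = {}" using FA FB disj by auto
  have cA: "lincomb c FA = v" using FA FAc unfolding c_def by (auto intro!: lincomb_cong)
  have "lincomb c FB = lincomb (\<lambda>w. (-1) * b w) FB"
    using FBc disj' unfolding c_def by (auto intro!: lincomb_cong)
  also have "\<dots> = (-1) \<cdot>\<^sub>v v" using lincomb_smult[where A=FB and a=b and c="-1"] FB FBc by auto
  finally have cB: "lincomb c FB = (-1) \<cdot>\<^sub>v v" .
  have vc: "v \<in> carrier_vec n" using FA FAc lincomb_closed by auto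
  have "lincomb c (FA \<union> FB) = lincomb c FA + lincomb c FB"
    using lincomb_union[OF FAc FBc disj'] FA FB by auto
  also have "\<dots> = 0\<^sub>v n" using cA cB vc by auto
  finally have "c \<in> FA \<union> FB \<rightarrow> {0}"
    using not_lindepD[OF li, of "FA \<union> FB" c] FA FB by auto
  then have "lincomb c FA = 0\<^sub>v n" using lincomb_zero[OF FAc, of c] by auto
  then show "v \<in> {0\<^sub>v n}" using cA by auto
qed

lemma lin_indpt_Un:
  assumes A: "A \<subseteq> carrier_vec n" and B: "B \<subseteq> carrier_vec n"
    and liA: "lin_indpt A" and liB: "lin_indpt B" and AB: "span A \<inter> span B \<subseteq> {0\<^sub>v n}"
  shows "lin_indpt (A \<union> B)"
proof
  assume "lin_dep (A \<union> B)"
  then obtain c F v where F: "finite F" "F \<subseteq> A \<union> B" "lincomb c F = 0\<^sub>v n" "v \<in> F" "c v \<noteq> 0"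
    unfolding lin_dep_def by auto
  define FA FB where "FA = F \<inter> A" and "FB = F - A"
  have FAc: "FA \<subseteq> carrier_vec n" and FBc: "FB \<subseteq> carrier_vec n" "FB \<subseteq> B"
    using F A B unfolding FA_def FB_def by auto
  have fin: "finite FA" "finite FB" using F unfolding FA_def FB_def by auto
  have "F = FA \<union> FB" "FA \<inter> FB = {}" unfolding FA_def FB_def by auto
  then have sum0: "lincomb c FA + lincomb c FB = 0\<^sub>v n"
    using lincomb_union[OF FAc FBc(1), of c] F fin by auto
  have "lincomb c FA = (lincomb c FA + lincomb c FB) + (-1) \<cdot>\<^sub>v lincomb c FB"
    using lincomb_closed[OF FAc, of c] lincomb_closed[OF FBc(1), of c] by (intro eq_vecI) auto
  also have "\<dots> = (-1) \<cdot>\<^sub>v lincomb c FB"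
    using sum0 lincomb_closed[OF FBc(1), of c] by simp
  also have "\<dots> = lincomb (\<lambda>w. (-1) * c w) FB"
    using lincomb_smult[where A=FB and a=c and c="-1"] FBc by auto
  finally have "lincomb c FA \<in> span B"
    using fin FBc unfolding span_def by auto
  moreover have "lincomb c FA \<in> span A"
    using fin FAc unfolding span_def FA_def by auto
  ultimately have zA: "lincomb c FA = 0\<^sub>v n" using AB by auto
  then have "c \<in> FA \<rightarrow> {0}" using not_lindepD[OF liA, of FA c] fin unfolding FA_def by auto
  moreover have "c \<in> FB \<rightarrow> {0}"
    using not_lindepD[OF liB, of FB c] fin FBc zA sum0 lincomb_closed[OF FBc(1)] by auto
  ultimately show False using F unfolding FA_def FB_def by auto
qed

lemma disjoint_of_span_Int:
  assumes A: "A \<subseteq> carrier_vec n" and B: "B \<subseteq> carrier_vec n"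
    and liB: "lin_indpt B" and AB: "span A \<inter> span B \<subseteq> {0\<^sub>v n}"
  shows "A \<inter> B = {}"
  using AB in_own_span[OF A] in_own_span[OF B] vs_zero_lin_dep[OF B liB] by auto

lemma subspace_dim_sum_Int:
  assumes U: "subspace class_ring U V" and W: "subspace class_ring W V"
  shows "subspace_dim n U + subspace_dim n W \<le>
    subspace_dim n (subspace_sum U W) + subspace_dim n (U \<inter> W)"
proof -
  have Uc: "U \<subseteq> carrier_vec n" and Wc: "W \<subseteq> carrier_vec n" using U W subspace_iff by auto
  obtain BI where BI: "BI \<subseteq> U \<inter> W" "finite BI" "lin_indpt BI" "span BI = U \<inter> W"
      "card BI = subspace_dim n (U \<inter> W)"
    using obtain_subspace_basis[OF subspace_Int[OF U W]] by metis
  obtain BU where BU: "BI \<subseteq> BU" "BU \<subseteq> U" "lin_indpt BU" "span BU = U"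
    using extend_to_basis[OF U, of BI] BI by auto
  have BUc: "BU \<subseteq> carrier_vec n" using BU Uc by auto
  have finBU: "finite BU" and cBU: "card BU = subspace_dim n U"
    using BU finite_card_le_of_lin_indpt[OF BUc] subspace_dim_span[OF BUc] by auto
  obtain BW where BW: "BW \<subseteq> W" "finite BW" "lin_indpt BW" "span BW = W" "card BW = subspace_dim n W"
    using obtain_subspace_basis[OF W] by metis
  define X where "X = BU - BI"
  have Xc: "X \<subseteq> carrier_vec n" and BIc: "BI \<subseteq> carrier_vec n" and BWc: "BW \<subseteq> carrier_vec n"
    using BU BI BW Uc Wc unfolding X_def by auto
  have "span BI \<inter> span X \<subseteq> {0\<^sub>v n}"
    using span_Int_span_of_disjoint[OF BIc Xc] BU unfolding X_def by (simp add: Un_absorb1)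
  moreover have "span X \<subseteq> U"
    using span_is_subset[of X U] U BU unfolding subspace_def X_def by auto
  ultimately have XBW: "span X \<inter> span BW \<subseteq> {0\<^sub>v n}" using BI BW by auto
  have "lin_indpt X" using subset_li_is_li[OF BU(3)] unfolding X_def by auto
  then have li: "lin_indpt (X \<union> BW)" using lin_indpt_Un[OF Xc BWc _ BW(3) XBW] by simp
  have disj: "X \<inter> BW = {}" by (rule disjoint_of_span_Int[OF Xc BWc BW(3) XBW])
  have "X \<union> BW \<subseteq> subspace_sum U W"
    using in_sum_vs[OF U W] in_sum_vs[OF W U] vsum_comm[OF U W] BU BW unfolding X_def by auto
  then have "card (X \<union> BW) \<le> subspace_dim n (subspace_sum U W)"
    using card_le_subspace_dim[OF sum_is_subspace[OF U W] _ li] by auto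
  moreover have "card (X \<union> BW) = card BU - card BI + card BW"
    using card_Un_disjoint[OF _ BW(2) disj] card_Diff_subset[OF BI(2) BU(1)] finBU
    unfolding X_def by auto
  moreover have "card BI \<le> card BU" using card_mono[OF finBU BU(1)] .
  ultimately show ?thesis using cBU BW BI by linarith
qed

lemma subspace_dim_span_unit_vecs:
  assumes "I \<subseteq> {..<n}"
  shows "subspace_dim n (span (unit_vec n ` I)) = card I"
proof -
  have sub: "unit_vec n ` I \<subseteq> set (unit_vecs n)"
    using assms unfolding unit_vecs_def by (auto simp: atLeast0LessThan)
  then have "lin_indpt (unit_vec n ` I)"
    using unit_vecs_basis subset_li_is_li unfolding basis_def by blast
  moreover have "inj_on (unit_vec n :: nat \<Rightarrow> 'a vec) I"
    using assms by (intro inj_onI) (metis index_unit_vec(1) lessThan_iff one_neq_zero subsetD)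
  ultimately show ?thesis
    using subspace_dim_span[of "unit_vec n ` I"] sub card_image unit_vecs_carrier by fastforce
qed

end

section \<open>Block vectors\<close>

definition vec_block :: "nat \<Rightarrow> nat \<Rightarrow> 'a vec \<Rightarrow> 'a vec" where
  "vec_block d s v = vec d (\<lambda>k. v $ (s * d + k))"

definition block_embed :: "nat \<Rightarrow> nat \<Rightarrow> nat \<Rightarrow> 'a::zero vec \<Rightarrow> 'a vec" where
  "block_embed p d s x = vec (p * d) (\<lambda>k. if k div d = s then x $ (k mod d) else 0)"

definition block_sum :: "nat \<Rightarrow> nat \<Rightarrow> (nat \<Rightarrow> 'a vec set) \<Rightarrow> 'a vec set" where
  "block_sum p d U = {v \<in> carrier_vec (p * d). \<forall>s<p. vec_block d s v \<in> U s}"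

lemma vec_block_carrier [simp]: "vec_block d s v \<in> carrier_vec d" "dim_vec (vec_block d s v) = d"
  unfolding vec_block_def by auto

lemma index_vec_block [simp]: "k < d \<Longrightarrow> vec_block d s v $ k = v $ (s * d + k)"
  unfolding vec_block_def by auto

lemma block_embed_carrier [simp]:
  "block_embed p d s x \<in> carrier_vec (p * d)" "dim_vec (block_embed p d s x) = p * d"
  unfolding block_embed_def by auto

lemma index_block_embed [simp]:
  "k < p * d \<Longrightarrow> block_embed p d s x $ k = (if k div d = s then x $ (k mod d) else 0)"
  unfolding block_embed_def by auto

lemma block_index:
  fixes t p k d :: nat
  assumes "t < p" "k < d"
  shows "t * d + k < p * d" "(t * d + k) div d = t" "(t * d + k) mod d = k"
proof -
  have "t * d + k < (t + 1) * d" using assms by simp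
  also have "\<dots> \<le> p * d" using assms by (intro mult_right_mono) auto
  finally show "t * d + k < p * d" .
  show "(t * d + k) div d = t" "(t * d + k) mod d = k" using assms by auto
qed

lemma vec_block_block_embed:
  assumes "t < p" "x \<in> carrier_vec d"
  shows "vec_block d t (block_embed p d s x) = (if t = s then x else 0\<^sub>v d)"
  by (rule eq_vecI) (use assms block_index[OF assms(1)] in auto)

lemma vec_block_add:
  assumes "v \<in> carrier_vec (p * d)" "w \<in> carrier_vec (p * d)" "s < p"
  shows "vec_block d s (v + w) = vec_block d s v + vec_block d s w"
  by (rule eq_vecI) (use assms block_index[OF assms(3)] in auto)

lemma vec_block_smult:
  assumes "v \<in> carrier_vec (p * d)" "s < p"
  shows "vec_block d s (c \<cdot>\<^sub>v v) = c \<cdot>\<^sub>v vec_block d s v"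
  by (rule eq_vecI) (use assms block_index[OF assms(2)] in auto)

lemma vec_block_zero:
  assumes "s < p" shows "vec_block d s (0\<^sub>v (p * d)) = (0\<^sub>v d :: 'a::zero vec)"
  by (rule eq_vecI) (use assms block_index[OF assms] in auto)

lemma sum_blocks: "(\<Sum>k<p * d. f k) = (\<Sum>s<p. \<Sum>j<d. f (s * d + j))" for p d :: nat
proof -
  have "(\<Sum>j<d. f (s * d + j)) = sum f {s * d..<s * d + d}" for s
    using sum.shift_bounds_nat_ivl[of f 0 "s * d" d] by (simp add: atLeast0LessThan add.commute)
  then show ?thesis using sum.nat_group[of f d p] by simp
qed

lemma cscalar_prod_blocks:
  assumes "x \<in> carrier_vec (p * d)" "y \<in> carrier_vec (p * d)"
  shows "x \<bullet>c y = (\<Sum>s<p. vec_block d s x \<bullet>c vec_block d s y)"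
proof -
  have "x \<bullet>c y = (\<Sum>k<p * d. x $ k * conjugate (y $ k))"
    using assms unfolding scalar_prod_def by (auto simp: atLeast0LessThan intro!: sum.cong)
  also have "\<dots> = (\<Sum>s<p. \<Sum>j<d. x $ (s * d + j) * conjugate (y $ (s * d + j)))"
    by (rule sum_blocks)
  also have "\<dots> = (\<Sum>s<p. vec_block d s x \<bullet>c vec_block d s y)"
    unfolding scalar_prod_def by (auto simp: atLeast0LessThan intro!: sum.cong)
  finally show ?thesis .
qed

locale block_vec_spaces =
  fixes f_ty :: "'a::field itself" and p d :: nat
begin

sublocale D: vec_space f_ty d .
sublocale N: vec_space f_ty "p * d" .

lemma subspace_block_sum:
  assumes U: "\<And>s. s < p \<Longrightarrow> subspace class_ring (U s) D.V"
  shows "subspace class_ring (block_sum p d U) N.V"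
  unfolding N.subspace_iff
proof (intro conjI ballI allI impI)
  have U0: "\<And>s. s < p \<Longrightarrow> 0\<^sub>v d \<in> U s" using U D.subspace_iff by blast
  then show "0\<^sub>v (p * d) \<in> block_sum p d U"
    unfolding block_sum_def by (auto simp: vec_block_zero)
  fix x y assume "x \<in> block_sum p d U" "y \<in> block_sum p d U"
  then show "x + y \<in> block_sum p d U"
    using U unfolding block_sum_def D.subspace_iff by (auto simp: vec_block_add)
next
  fix c x assume "x \<in> block_sum p d U"
  then show "c \<cdot>\<^sub>v x \<in> block_sum p d U"
    using U unfolding block_sum_def D.subspace_iff by (auto simp: vec_block_smult)
qed (auto simp: block_sum_def)

lemma inj_on_block_embed: "t < p \<Longrightarrow> inj_on (block_embed p d t) (carrier_vec d)"
  by (rule inj_onI) (metis vec_block_block_embed)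

lemma lin_indpt_block_embed_UN:
  assumes \<beta>: "\<And>s. s < p \<Longrightarrow> \<beta> s \<subseteq> carrier_vec d" "\<And>s. s < p \<Longrightarrow> D.lin_indpt (\<beta> s)"
  shows "N.lin_indpt (\<Union>s<p. block_embed p d s ` \<beta> s)"
proof
  assume "N.lin_dep (\<Union>s<p. block_embed p d s ` \<beta> s)"
  then obtain c F w where F: "finite F" "F \<subseteq> (\<Union>s<p. block_embed p d s ` \<beta> s)"
      "N.lincomb c F = 0\<^sub>v (p * d)" "w \<in> F" "c w \<noteq> 0"
    unfolding N.lin_dep_def by auto
  then obtain t y where t: "t < p" "y \<in> \<beta> t" "w = block_embed p d t y" by auto
  define G where "G = {z \<in> \<beta> t. block_embed p d t z \<in> F}"
  have G: "G \<subseteq> \<beta> t" "y \<in> G" using t F unfolding G_def by auto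
  have inj\<beta>: "inj_on (block_embed p d t) (\<beta> t)"
    using inj_on_subset[OF inj_on_block_embed[OF t(1)] \<beta>(1)[OF t(1)]] .
  then have inj: "inj_on (block_embed p d t) G" using G(1) inj_on_subset by blast
  have "G = block_embed p d t -` F \<inter> \<beta> t" unfolding G_def by auto
  then have finG: "finite G" using finite_vimage_IntI[OF F(1) inj\<beta>] by simp
  have Fc: "F \<subseteq> carrier_vec (p * d)" and Gc: "G \<subseteq> carrier_vec d"
    using F G \<beta>(1)[OF t(1)] by auto
  have "D.lincomb (c \<circ> block_embed p d t) G = 0\<^sub>v d"
  proof (rule eq_vecI)
    fix k assume "k < dim_vec (0\<^sub>v d :: 'a vec)"
    then have k: "k < d" by simp
    note idx = block_index[OF t(1) k]
    have "0 = N.lincomb c F $ (t * d + k)" using F(3) idx by simp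
    also have "\<dots> = (\<Sum>x\<in>F. c x * x $ (t * d + k))" using N.lincomb_index[OF idx(1) Fc] .
    also have "\<dots> = (\<Sum>x\<in>block_embed p d t ` G. c x * x $ (t * d + k))"
    proof (rule sum.mono_neutral_right[OF F(1)])
      show "block_embed p d t ` G \<subseteq> F" unfolding G_def by auto
      show "\<forall>x\<in>F - block_embed p d t ` G. c x * x $ (t * d + k) = 0"
        using F(2) idx unfolding G_def by fastforce
    qed
    also have "\<dots> = (\<Sum>z\<in>G. c (block_embed p d t z) * block_embed p d t z $ (t * d + k))"
      by (rule sum.reindex[OF inj, unfolded comp_def])
    also have "\<dots> = (\<Sum>z\<in>G. (c \<circ> block_embed p d t) z * z $ k)"
      using idx by simp
    also have "\<dots> = D.lincomb (c \<circ> block_embed p d t) G $ k" using D.lincomb_index[OF k Gc] ..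
    finally show "D.lincomb (c \<circ> block_embed p d t) G $ k = 0\<^sub>v d $ k" using k by simp
  qed (use D.lincomb_closed[OF Gc] in auto)
  then have "c \<circ> block_embed p d t \<in> G \<rightarrow> {0}"
    using D.not_lindepD[OF \<beta>(2)[OF t(1)] finG G(1)] by auto
  then show False using G(2) t F(5) by auto
qed

lemma card_block_embed_UN:
  assumes \<beta>: "\<And>s. s < p \<Longrightarrow> \<beta> s \<subseteq> carrier_vec d" "\<And>s. s < p \<Longrightarrow> D.lin_indpt (\<beta> s)"
  shows "card (\<Union>s<p. block_embed p d s ` \<beta> s) = (\<Sum>s<p. card (\<beta> s))"
proof -
  have fin: "finite (\<beta> s)" if "s < p" for s
    using D.finite_card_le_of_lin_indpt \<beta> that by blast
  have "block_embed p d s ` \<beta> s \<inter> block_embed p d t ` \<beta> t = {}"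
    if st: "s < p" "t < p" "s \<noteq> t" for s t
  proof -
    have "x = 0\<^sub>v d" if xz: "x \<in> \<beta> s" "z \<in> \<beta> t" "block_embed p d s x = block_embed p d t z" for x z
      using vec_block_block_embed[of s p x d s] vec_block_block_embed[of s p z d t] xz st
        \<beta>(1)[OF st(1)] \<beta>(1)[OF st(2)] by auto
    then show ?thesis using D.vs_zero_lin_dep[OF \<beta>(1,2)[OF st(1)]] by auto
  qed
  then have "card (\<Union>s<p. block_embed p d s ` \<beta> s) = (\<Sum>s<p. card (block_embed p d s ` \<beta> s))"
    by (intro card_UN_disjoint) (auto simp: fin)
  also have "\<dots> = (\<Sum>s<p. card (\<beta> s))"
    using card_image inj_on_subset[OF inj_on_block_embed \<beta>(1)] by (intro sum.cong) auto
  finally show ?thesis .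
qed

lemma obtain_subspace_of_block_sum:
  assumes U: "\<And>s. s < p \<Longrightarrow> subspace class_ring (U s) D.V"
  obtains X where "subspace class_ring X N.V" "X \<subseteq> block_sum p d U"
    "subspace_dim (p * d) X = (\<Sum>s<p. subspace_dim d (U s))"
proof -
  have "\<forall>s. \<exists>B. s < p \<longrightarrow> B \<subseteq> U s \<and> D.lin_indpt B \<and> card B = subspace_dim d (U s)"
  proof
    fix s show "\<exists>B. s < p \<longrightarrow> B \<subseteq> U s \<and> D.lin_indpt B \<and> card B = subspace_dim d (U s)"
    proof (cases "s < p")
      case True
      obtain B where B: "B \<subseteq> U s" "finite B" "D.lin_indpt B" "D.span B = U s"
          "card B = subspace_dim d (U s)"
        by (rule D.obtain_subspace_basis[OF U[OF True]])
      then show ?thesis by (intro exI[of _ B]) simp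
    qed simp
  qed
  from choice[OF this] obtain \<beta> where
    "\<forall>s. s < p \<longrightarrow> \<beta> s \<subseteq> U s \<and> D.lin_indpt (\<beta> s) \<and> card (\<beta> s) = subspace_dim d (U s)" ..
  then have \<beta>: "\<And>s. s < p \<Longrightarrow> \<beta> s \<subseteq> U s" "\<And>s. s < p \<Longrightarrow> D.lin_indpt (\<beta> s)"
      "\<And>s. s < p \<Longrightarrow> card (\<beta> s) = subspace_dim d (U s)"
    by simp_all
  have Uc: "U s \<subseteq> carrier_vec d" and U0: "0\<^sub>v d \<in> U s" if "s < p" for s
    using U[OF that] by (simp_all add: D.subspace_iff)
  have \<beta>c: "\<beta> s \<subseteq> carrier_vec d" if "s < p" for s
    using \<beta>(1)[OF that] Uc[OF that] by (rule order_trans)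
  define E where "E = (\<Union>s<p. block_embed p d s ` \<beta> s)"
  have Ec: "E \<subseteq> carrier_vec (p * d)" unfolding E_def by auto
  have li: "N.lin_indpt E" unfolding E_def by (rule lin_indpt_block_embed_UN[OF \<beta>c \<beta>(2)])
  have "E \<subseteq> block_sum p d U"
  proof
    fix v assume "v \<in> E"
    then obtain s x where sx: "s < p" "x \<in> \<beta> s" "v = block_embed p d s x" unfolding E_def by auto
    have xc: "x \<in> carrier_vec d" using \<beta>c[OF sx(1)] sx(2) by blast
    have "vec_block d t v \<in> U t" if t: "t < p" for t
      using vec_block_block_embed[OF t xc, of s] sx \<beta>(1)[OF sx(1)] U0[OF t] by auto
    then show "v \<in> block_sum p d U" unfolding block_sum_def using sx by auto
  qed
  moreover have "submodule class_ring (block_sum p d U) N.V"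
    using subspace_block_sum[OF U] unfolding subspace_def by simp
  ultimately have "N.span E \<subseteq> block_sum p d U" by (rule N.span_is_subset)
  moreover have "subspace_dim (p * d) (N.span E) = (\<Sum>s<p. subspace_dim d (U s))"
    using N.subspace_dim_span[OF Ec li] card_block_embed_UN[OF \<beta>c \<beta>(2)] \<beta>(3)
    unfolding E_def by simp
  ultimately show thesis using that[OF N.span_is_subspace[OF Ec]] by simp
qed

end

section \<open>Orthogonal representations of fraction graphs\<close>

definition orth :: "complex vec set \<Rightarrow> complex vec set \<Rightarrow> bool" where
  "orth X Y \<longleftrightarrow> (\<forall>x\<in>X. \<forall>y\<in>Y. x \<bullet>c y = 0)"

lemma orth_mono: "orth X Y \<Longrightarrow> X' \<subseteq> X \<Longrightarrow> Y' \<subseteq> Y \<Longrightarrow> orth X' Y'"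
  unfolding orth_def by auto

lemma orth_sym:
  assumes "X \<subseteq> carrier_vec n" "Y \<subseteq> carrier_vec n" "orth X Y"
  shows "orth Y X"
  unfolding orth_def
proof (intro ballI)
  fix y x assume "y \<in> Y" "x \<in> X"
  then have "conjugate (x \<bullet>c y) = y \<bullet>c x"
    using assms by (metis conjugate_vec_sprod_comm conjugate_conjugate_sprod subsetD)
  then show "y \<bullet>c x = 0" using assms \<open>y \<in> Y\<close> \<open>x \<in> X\<close> unfolding orth_def by auto
qed

lemma orth_submodule_sum:
  fixes n :: nat and X1 X2 Y1 Y2 :: "complex vec set"
  defines "S \<equiv> module.submodule_sum (module_vec TYPE(complex) n)"
  assumes c: "X1 \<subseteq> carrier_vec n" "X2 \<subseteq> carrier_vec n" "Y1 \<subseteq> carrier_vec n" "Y2 \<subseteq> carrier_vec n"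
    and o: "orth X1 Y1" "orth X1 Y2" "orth X2 Y1" "orth X2 Y2"
  shows "orth (S X1 X2) (S Y1 Y2)"
proof -
  interpret vec_space "TYPE(complex)" n .
  have S: "S A B = {a + b | a b. a \<in> A \<and> b \<in> B}" for A B
    unfolding S_def submodule_sum_def by auto
  have left: "orth (S A B) Z"
    if "A \<subseteq> carrier_vec n" "B \<subseteq> carrier_vec n" "Z \<subseteq> carrier_vec n" "orth A Z" "orth B Z" for A B Z
    unfolding orth_def
  proof (intro ballI)
    fix x z assume "x \<in> S A B" "z \<in> Z"
    then obtain a b where ab: "a \<in> A" "b \<in> B" "x = a + b" unfolding S by auto
    then have "x \<bullet>c z = a \<bullet>c z + b \<bullet>c z"
      using that \<open>z \<in> Z\<close> by (auto intro!: add_scalar_prod_distrib[of _ n])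
    then show "x \<bullet>c z = 0" using that ab \<open>z \<in> Z\<close> unfolding orth_def by auto
  qed
  have SY: "S Y1 Y2 \<subseteq> carrier_vec n" using c unfolding S by auto
  have "orth (S Y1 Y2) X1"
    by (rule left[OF c(3,4,1) orth_sym[OF c(1,3) o(1)] orth_sym[OF c(1,4) o(2)]])
  moreover have "orth (S Y1 Y2) X2"
    by (rule left[OF c(3,4,2) orth_sym[OF c(2,3) o(3)] orth_sym[OF c(2,4) o(4)]])
  ultimately show ?thesis using left[OF c(1,2) SY] orth_sym[OF SY] c(1,2) by blast
qed

lemma orth_block_sum:
  assumes "\<And>s. s < p \<Longrightarrow> orth (U s) (U' s)"
  shows "orth (block_sum p d U) (block_sum p d U')"
  unfolding orth_def
proof (intro ballI)
  fix x y assume "x \<in> block_sum p d U" "y \<in> block_sum p d U'"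
  then show "x \<bullet>c y = 0"
    using assms unfolding block_sum_def orth_def
    by (auto simp: cscalar_prod_blocks intro!: sum.neutral)
qed

lemma orth_span_unit_vecs:
  fixes I J :: "nat set"
  assumes "I \<inter> J = {}"
  shows "orth
    (LinearCombinations.module.span class_ring (module_vec TYPE(complex) n) (unit_vec n ` I))
    (LinearCombinations.module.span class_ring (module_vec TYPE(complex) n) (unit_vec n ` J))"
proof -
  interpret vec_space "TYPE(complex)" n .
  define coord :: "nat set \<Rightarrow> complex vec set"
    where "coord K = {v \<in> carrier_vec n. \<forall>k<n. k \<notin> K \<longrightarrow> v $ k = 0}" for K
  have span_coord: "span (unit_vec n ` K) \<subseteq> coord K" for K
  proof (rule span_is_subset)
    show "unit_vec n ` K \<subseteq> coord K" unfolding coord_def by (auto simp: unit_vec_def)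
    show "submodule class_ring (coord K) V"
      using subspace_iff[of "coord K"] unfolding coord_def subspace_def by auto
  qed
  have "orth (coord I) (coord J)"
    unfolding orth_def coord_def scalar_prod_def using assms
    by (auto intro!: sum.neutral simp: disjoint_iff)
  then show ?thesis by (rule orth_mono[OF _ span_coord span_coord])
qed

definition cyclically_orth :: "nat \<Rightarrow> nat \<Rightarrow> (nat \<Rightarrow> complex vec set) \<Rightarrow> bool" where
  "cyclically_orth p k W \<longleftrightarrow> (\<forall>i<p. \<forall>j<p. k \<le> cyc_dist p i j \<longrightarrow> orth (W i) (W j))"

lemma comp_proj_rep_frac_iff:
  assumes "0 < k"
  shows "comp_proj_rep (frac_verts p) (frac_adj p k) d r \<longleftrightarrow>
    (\<exists>W. (\<forall>i<p. is_subspace_of_dim d r (W i)) \<and> cyclically_orth p k W)"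
proof -
  have "(i \<noteq> j \<and> \<not> frac_adj p k i j) \<longleftrightarrow> k \<le> cyc_dist p i j" for i j
    using assms cyc_dist_self[of p i] unfolding frac_adj_def by auto
  then show ?thesis
    unfolding comp_proj_rep_def cyclically_orth_def orth_def frac_verts_def
    by (simp add: Ball_def atLeast0LessThan)
qed

lemma cyclically_orth_neighbour_sums:
  assumes W: "cyclically_orth p k W" "\<And>i. i < p \<Longrightarrow> W i \<subseteq> carrier_vec d"
  shows "cyclically_orth p (k + 1)
    (\<lambda>i. module.submodule_sum (module_vec TYPE(complex) d) (W i) (W ((i + 1) mod p)))"
  unfolding cyclically_orth_def
proof (intro allI impI)
  fix i j assume ij: "i < p" "j < p" and dist: "k + 1 \<le> cyc_dist p i j"
  have i': "(i + 1) mod p < p" and j': "(j + 1) mod p < p" using ij by simp_all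
  have "cyc_dist p ((i + 1) mod p) ((j + 1) mod p) = cyc_dist p i j"
    by (rule cyc_dist_rotate[OF ij])
  then have "k \<le> cyc_dist p ((i + 1) mod p) ((j + 1) mod p)" using dist by linarith
  then show "orth (module.submodule_sum (module_vec TYPE(complex) d) (W i) (W ((i + 1) mod p)))
                  (module.submodule_sum (module_vec TYPE(complex) d) (W j) (W ((j + 1) mod p)))"
    using W(1) ij i' j' dist cyc_dist_Suc_left[OF ij] cyc_dist_Suc_right[OF ij]
    by (intro orth_submodule_sum W(2)) (auto simp: cyclically_orth_def)
qed

lemma cyclically_orth_neighbour_Ints:
  assumes W: "cyclically_orth p k W" and k: "2 * k \<le> p" "2 \<le> k"
  shows "cyclically_orth p (k - 1) (\<lambda>i. W i \<inter> W ((i + 1) mod p))"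
  unfolding cyclically_orth_def
proof (intro allI impI)
  fix i j assume ij: "i < p" "j < p" and dist: "k - 1 \<le> cyc_dist p i j"
  have i': "(i + 1) mod p < p" and j': "(j + 1) mod p < p" using ij by simp_all
  have o: "\<And>a b. a < p \<Longrightarrow> b < p \<Longrightarrow> k \<le> cyc_dist p a b \<Longrightarrow> orth (W a) (W b)"
    using W unfolding cyclically_orth_def by blast
  consider "k \<le> cyc_dist p i j" | "k \<le> cyc_dist p ((i + 1) mod p) j"
    | "k \<le> cyc_dist p i ((j + 1) mod p)"
    using cyc_dist_neighbour_ge[OF ij k dist] by blast
  then show "orth (W i \<inter> W ((i + 1) mod p)) (W j \<inter> W ((j + 1) mod p))"
  proof cases
    case 1
    show ?thesis by (rule orth_mono[OF o[OF ij 1] Int_lower1 Int_lower1])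
  next
    case 2
    show ?thesis by (rule orth_mono[OF o[OF i' ij(2) 2] Int_lower2 Int_lower1])
  next
    case 3
    show ?thesis by (rule orth_mono[OF o[OF ij(1) j' 3] Int_lower1 Int_lower2])
  qed
qed

lemma comp_proj_rep_cyclic_blowup:
  assumes k: "0 < k" and U: "\<And>i. i < p \<Longrightarrow> subspace class_ring (U i) (module_vec TYPE(complex) d)"
    and orth: "cyclically_orth p k U"
  shows "comp_proj_rep (frac_verts p) (frac_adj p k) (p * d) (\<Sum>i<p. subspace_dim d (U i))"
proof -
  interpret block_vec_spaces "TYPE(complex)" p d .
  define R where "R i s = U ((i + s) mod p)" for i s
  have "\<exists>X. subspace class_ring X N.V \<and> X \<subseteq> block_sum p d (R i) \<and>
      subspace_dim (p * d) X = (\<Sum>s<p. subspace_dim d (U s))" if i: "i < p" for i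
  proof -
    have "(\<Sum>s<p. subspace_dim d (R i s)) = (\<Sum>s<p. subspace_dim d (U s))"
      unfolding R_def using sum.reindex_bij_betw[OF bij_betw_add_mod[OF i]] by simp
    moreover obtain X where "subspace class_ring X N.V" "X \<subseteq> block_sum p d (R i)"
        "subspace_dim (p * d) X = (\<Sum>s<p. subspace_dim d (R i s))"
      by (rule obtain_subspace_of_block_sum[of "R i"]) (use U in \<open>simp add: R_def\<close>)
    ultimately show ?thesis by auto
  qed
  then obtain X where X: "\<And>i. i < p \<Longrightarrow> subspace class_ring (X i) N.V"
      "\<And>i. i < p \<Longrightarrow> X i \<subseteq> block_sum p d (R i)"
      "\<And>i. i < p \<Longrightarrow> subspace_dim (p * d) (X i) = (\<Sum>s<p. subspace_dim d (U s))"
    by metis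
  have "cyclically_orth p k X"
    unfolding cyclically_orth_def
  proof (intro allI impI)
    fix i j assume ij: "i < p" "j < p" and dist: "k \<le> cyc_dist p i j"
    have "orth (block_sum p d (R i)) (block_sum p d (R j))"
      using orth ij dist cyc_dist_rotate[OF ij] unfolding R_def cyclically_orth_def
      by (intro orth_block_sum) simp
    then show "orth (X i) (X j)" using X(2)[OF ij(1)] X(2)[OF ij(2)] by (rule orth_mono)
  qed
  then show ?thesis
    unfolding comp_proj_rep_frac_iff[OF k] using X(1,3) by (auto simp: is_subspace_of_dim_iff)
qed

lemma comp_proj_rep_frac_self:
  assumes q: "0 < q" "q \<le> p"
  shows "comp_proj_rep (frac_verts p) (frac_adj p q) p q"
proof -
  interpret vec_space "TYPE(complex)" p .
  define I where "I i = (\<lambda>t. (i + t) mod p) ` {..<q}" for i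
  define W where "W i = span (unit_vec p ` I i)" for i
  have I: "I i \<subseteq> {..<p}" for i unfolding I_def using q by auto
  have "card (I i) = q" if "i < p" for i
  proof -
    have "inj_on (\<lambda>t. (i + t) mod p) {..<q}"
      using inj_on_subset[OF bij_betw_imp_inj_on[OF bij_betw_add_mod[OF that]]] q(2) by simp
    then show ?thesis unfolding I_def by (simp add: card_image)
  qed
  moreover have "subspace class_ring (W i) V" for i
    unfolding W_def using I by (intro span_is_subspace) auto
  ultimately have W: "is_subspace_of_dim p q (W i)" if "i < p" for i
    unfolding is_subspace_of_dim_iff W_def using subspace_dim_span_unit_vecs[OF I] that by simp
  have "cyclically_orth p q W"
    unfolding cyclically_orth_def W_def
  proof (intro allI impI orth_span_unit_vecs)
    fix i j assume ij: "i < p" "j < p" "q \<le> cyc_dist p i j"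
    show "I i \<inter> I j = {}" using add_mod_neq_of_le_cyc_dist[OF ij] unfolding I_def by auto
  qed
  then show ?thesis unfolding comp_proj_rep_frac_iff[OF q(1)] using W by blast
qed

lemma xi_f_bar_le:
  assumes "comp_proj_rep V adj d r" "1 \<le> d" "1 \<le> r"
  shows "xi_f_bar V adj \<le> real d / real r"
  unfolding xi_f_bar_def by (rule cInf_lower) (use assms in \<open>auto intro: bdd_belowI[of _ 0]\<close>)

lemma xi_f_bar_greatest:
  assumes "comp_proj_rep V adj d0 r0" "1 \<le> d0" "1 \<le> r0"
    and "\<And>d r. comp_proj_rep V adj d r \<Longrightarrow> 1 \<le> d \<Longrightarrow> 1 \<le> r \<Longrightarrow> c \<le> real d / real r"
  shows "c \<le> xi_f_bar V adj"
  unfolding xi_f_bar_def by (rule cInf_greatest) (use assms in auto)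

lemma rank_le_of_xi_f_bar:
  assumes xi: "xi_f_bar V adj = real m / real k" and k: "0 < k"
    and rep: "comp_proj_rep V adj n a" "1 \<le> n"
  shows "a * m \<le> n * k"
proof (cases "a = 0")
  case False
  then have "real m / real k \<le> real n / real a" using xi_f_bar_le[OF rep] xi by simp
  then have "real (a * m) \<le> real (n * k)" using False k by (simp add: field_simps)
  then show ?thesis by (simp only: of_nat_le_iff)
qed simp

lemma sum_subspace_dim_le_of_xi_f_bar:
  assumes xi: "xi_f_bar (frac_verts p) (frac_adj p k) = real p / real k" and k: "0 < k"
    and U: "\<And>i. i < p \<Longrightarrow> subspace class_ring (U i) (module_vec TYPE(complex) d)"
    and orth: "cyclically_orth p k U" and d: "1 \<le> d"
  shows "(\<Sum>i<p. subspace_dim d (U i)) \<le> d * k"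
proof (cases "p = 0")
  case False
  have "comp_proj_rep (frac_verts p) (frac_adj p k) (p * d) (\<Sum>i<p. subspace_dim d (U i))"
    by (rule comp_proj_rep_cyclic_blowup[OF k _ orth]) (rule U)
  moreover have "1 \<le> p * d" using mult_le_mono[of 1 p 1 d] False d by simp
  ultimately have "(\<Sum>i<p. subspace_dim d (U i)) * p \<le> p * d * k"
    by (rule rank_le_of_xi_f_bar[OF xi k])
  then have "p * (\<Sum>i<p. subspace_dim d (U i)) \<le> p * (d * k)" by (simp only: ac_simps)
  moreover have "0 < p" using False by simp
  ultimately show ?thesis by (rule mult_left_le_imp_le)
qed simp

lemma frac_rep_lower_bound:
  assumes q: "2 \<le> q" "2 * q \<le> p"
    and xi_lo: "xi_f_bar (frac_verts p) (frac_adj p (q - 1)) = real p / real (q - 1)"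
    and xi_hi: "xi_f_bar (frac_verts p) (frac_adj p (q + 1)) = real p / real (q + 1)"
    and rep: "comp_proj_rep (frac_verts p) (frac_adj p q) d r" and d: "1 \<le> d"
  shows "p * r \<le> q * d"
proof -
  obtain W where W: "\<And>i. i < p \<Longrightarrow> is_subspace_of_dim d r (W i)" and orth: "cyclically_orth p q W"
    using rep comp_proj_rep_frac_iff[of q] q by auto
  interpret D: vec_space "TYPE(complex)" d .
  have Ws: "subspace class_ring (W i) D.V" and Wr: "subspace_dim d (W i) = r"
    and Wc: "W i \<subseteq> carrier_vec d" if "i < p" for i
    using W[OF that] by (simp_all add: is_subspace_of_dim_iff D.subspace_iff)
  define A where "A i = D.subspace_sum (W i) (W ((i + 1) mod p))" for i
  define B where "B i = W i \<inter> W ((i + 1) mod p)" for i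
  have i': "\<And>i. (i + 1) mod p < p" using q by simp
  have A: "subspace class_ring (A i) D.V" and B: "subspace class_ring (B i) D.V" if "i < p" for i
    unfolding A_def B_def using Ws[OF that] Ws[OF i']
    by (simp_all add: D.sum_is_subspace D.subspace_Int)
  let ?a = "\<Sum>i<p. subspace_dim d (A i)" and ?b = "\<Sum>i<p. subspace_dim d (B i)"
  have "2 * r \<le> subspace_dim d (A i) + subspace_dim d (B i)" if "i < p" for i
    using D.subspace_dim_sum_Int[OF Ws[OF that] Ws[OF i'[of i]]] Wr[OF that] Wr[OF i'[of i]]
    unfolding A_def B_def by simp
  then have "(\<Sum>i<p. 2 * r) \<le> (\<Sum>i<p. subspace_dim d (A i) + subspace_dim d (B i))"
    by (intro sum_mono) simp
  then have ab: "2 * p * r \<le> ?a + ?b" by (simp add: sum.distrib)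
  have a: "?a \<le> d * (q + 1)"
  proof (rule sum_subspace_dim_le_of_xi_f_bar[OF xi_hi _ _ _ d])
    show "cyclically_orth p (q + 1) A"
      using cyclically_orth_neighbour_sums[OF orth Wc] unfolding A_def .
  qed (use A in auto)
  have b: "?b \<le> d * (q - 1)"
  proof (rule sum_subspace_dim_le_of_xi_f_bar[OF xi_lo _ _ _ d])
    show "cyclically_orth p (q - 1) B"
      using cyclically_orth_neighbour_Ints[OF orth q(2,1)] unfolding B_def .
  qed (use B q in auto)
  have "d * (q + 1) + d * (q - 1) = 2 * q * d" using q by (cases q) (auto simp: algebra_simps)
  then show ?thesis using ab a b by linarith
qed

theorem lemma17:
  fixes p q :: nat
  assumes "2 \<le> q" and "real q \<le> real p / 2 - 1"
    and "xi_f_bar (frac_verts p) (frac_adj p (q - 1)) = real p / real (q - 1)"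
    and "xi_f_bar (frac_verts p) (frac_adj p (q + 1)) = real p / real (q + 1)"
  shows "xi_f_bar (frac_verts p) (frac_adj p q) = real p / real q"
proof -
  have pq: "2 * q + 2 \<le> p" using assms(2) by linarith
  have rep: "comp_proj_rep (frac_verts p) (frac_adj p q) p q"
    using comp_proj_rep_frac_self assms(1) pq by simp
  have "xi_f_bar (frac_verts p) (frac_adj p q) \<le> real p / real q"
    using xi_f_bar_le[OF rep] assms(1) pq by simp
  moreover have "real p / real q \<le> xi_f_bar (frac_verts p) (frac_adj p q)"
  proof (rule xi_f_bar_greatest[OF rep])
    fix d r assume rep': "comp_proj_rep (frac_verts p) (frac_adj p q) d r" "1 \<le> d" "1 \<le> r"
    have "p * r \<le> q * d"
      by (rule frac_rep_lower_bound[OF assms(1) _ assms(3,4) rep'(1,2)]) (use pq in simp)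
    then have "real p * real r \<le> real d * real q" by (simp flip: of_nat_mult add: mult.commute)
    moreover have "0 < real q" "0 < real r" using assms(1) rep'(3) by simp_all
    ultimately show "real p / real q \<le> real d / real r" by (simp add: divide_simps)
  qed (use assms(1) pq in auto)
  ultimately show ?thesis by linarith
qed

end
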